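(* Let $\Lambda=[\lambda_{\min},\lambda_{\max}]\subset[0,\infty)$ and let $\tilde\nu(\lambda,dx)$ be a probability kernel on $(0,\infty)$ with $s_0>0$ such that $\sup_{\lambda\in\Lambda}\int_0^\infty e^{sx}\tilde\nu(\lambda,dx)<\infty$ for all $s\in[0,s_0)$. Fix $\eta=\delta+iy$ with $\delta\in[0,s_0)$ and $r\ge0$. Let $\{(T_k,X_k)\}$ be a marked point process whose jump measure has compensator $\lambda_s\tilde\nu(\lambda_s,dx)ds$, and suppose $\lambda_s\in\Lambda$ (in particular $\lambda_s\le\lambda_{\max}$) for all $s\in[t,T]$. Define $$F(t,\lambda,\eta):=\mathbb E\Big[e^{-r(T-t)}\prod_{t<T_k\le T}e^{\eta X_k}\ \Big|\ \lambda_t=\lambda\Big].$$ Then $$|F(t,\lambda,\eta)|\le\exp\Big((T-t)\big[\lambda_{\max}(M^*_\eta-1)-r\big]\Big),\qquad M^*_\eta:=\sup_{\lambda\in\Lambda}\int_0^\infty e^{\delta x}\tilde\nu(\lambda,dx).$$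
   Context: $\lambda_s$ is the (predictable) jump intensity of the marked point process; the jumps of the accumulated mark process are the marks $X_k$. *)

theory Defs
  imports "HOL-Probability.Probability"
begin

definition mpp_filtration :: "'a measure \<Rightarrow> (real \<Rightarrow> 'a measure) \<Rightarrow> bool" where
  "mpp_filtration M F \<longleftrightarrow>
     (\<forall>s. space (F s) = space M \<and> sets (F s) \<subseteq> sets M) \<and>
     (\<forall>s u. s \<le> u \<longrightarrow> sets (F s) \<subseteq> sets (F u))"

definition predictable :: "'a measure \<Rightarrow> (real \<Rightarrow> 'a measure) \<Rightarrow> ('a \<times> real) measure" where
  "predictable M F = sigma (space M \<times> {0..})
     ({A \<times> {s<..u} | A s u. 0 \<le> s \<and> s \<le> u \<and> A \<in> sets (F s)} \<union>
      {A \<times> {0} | A. A \<in> sets (F 0)})"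

text \<open>An F-adapted marked point process with jump times Tk (values in (0,inf], strictly
  increasing while finite, infinity meaning no further jump) and marks X in (0,inf).\<close>
definition marked_point_process ::
  "'a measure \<Rightarrow> (real \<Rightarrow> 'a measure) \<Rightarrow> (nat \<Rightarrow> 'a \<Rightarrow> ereal) \<Rightarrow> (nat \<Rightarrow> 'a \<Rightarrow> real) \<Rightarrow> bool" where
  "marked_point_process M F Tk X \<longleftrightarrow>
     (\<forall>k. Tk k \<in> borel_measurable M \<and> X k \<in> borel_measurable M) \<and>
     (\<forall>\<omega>\<in>space M. \<forall>k. 0 < Tk k \<omega> \<and> Tk k \<omega> \<le> Tk (Suc k) \<omega> \<and>
        (Tk k \<omega> < \<infinity> \<longrightarrow> Tk k \<omega> < Tk (Suc k) \<omega> \<and> 0 < X k \<omega>)) \<and>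
     (\<forall>k s B. B \<in> sets borel \<longrightarrow>
        {\<omega>\<in>space M. Tk k \<omega> \<le> ereal s \<and> X k \<omega> \<in> B} \<in> sets (F s))"

text \<open>The jump measure sum_k delta_(T_k,X_k) has F-compensator lam_s nu(lam_s,dx) ds
  (dual predictable projection characterisation).\<close>
definition has_compensator ::
  "'a measure \<Rightarrow> (real \<Rightarrow> 'a measure) \<Rightarrow> (nat \<Rightarrow> 'a \<Rightarrow> ereal) \<Rightarrow> (nat \<Rightarrow> 'a \<Rightarrow> real)
    \<Rightarrow> ('a \<Rightarrow> real \<Rightarrow> real) \<Rightarrow> (real \<Rightarrow> real measure) \<Rightarrow> bool" where
  "has_compensator M F Tk X lam nu \<longleftrightarrow>
     (\<forall>H \<in> borel_measurable (predictable M F \<Otimes>\<^sub>M (borel :: real measure)).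
        (\<integral>\<^sup>+\<omega>. (\<Sum>k. if Tk k \<omega> < \<infinity> then H ((\<omega>, real_of_ereal (Tk k \<omega>)), X k \<omega>) else 0) \<partial>M)
        = (\<integral>\<^sup>+\<omega>. (\<integral>\<^sup>+s\<in>{0..}. ennreal (lam \<omega> s) *
              (\<integral>\<^sup>+x. H ((\<omega>, s), x) \<partial>nu (lam \<omega> s)) \<partial>lborel) \<partial>M))"

definition cond_exp_complex :: "'a measure \<Rightarrow> 'a measure \<Rightarrow> ('a \<Rightarrow> complex) \<Rightarrow> 'a \<Rightarrow> complex" where
  "cond_exp_complex M N f = (\<lambda>\<omega>. Complex (real_cond_exp M N (\<lambda>x. Re (f x)) \<omega>)
                                          (real_cond_exp M N (\<lambda>x. Im (f x)) \<omega>))"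

end

theory Submission
  imports Defs
begin

(*
  Fix A in F_t and let Q_m(u) be the product of exp(delta X_k) over those of the first m jump
  times T_k that lie in (t, u]. Adding the jumps one at a time gives

    Q_{m+1}(u) <= 1 + sum_k (exp(delta X_k) - 1) Q_m(T_k-) [t < T_k <= u],

  a predictable process integrated against the jump measure. Replacing the jump measure by its
  compensator lambda_s nu(lambda_s, dx) ds and bounding lambda_s int (exp(delta x) - 1) nu(lambda_s, dx)
  by c = lambda_max (M* - 1) yields

    E[1_A Q_{m+1}(u)] <= P(A) + c int_t^u E[1_A Q_m(s)] ds,

  so E[1_A Q_m(u)] <= P(A) exp(c (u - t)) by induction on m. Monotone convergence in m bounds
  E[1_A exp(delta S)] for the sum S of the marks in (t, T]. As |exp(eta x)| = exp(delta x), the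
  discounted integrand f thus satisfies E[1_B |f|] <= K P(B) for every B in sigma(lambda_t), and such
  a bound on all conditioning events forces |E[f | lambda_t]| <= K almost surely.
*)

lemma ennreal_eq_1_plus_minus_1: "1 \<le> x \<Longrightarrow> ennreal x = 1 + ennreal (x - 1)"
  by (subst ennreal_1[symmetric], subst ennreal_plus[symmetric]) auto

lemma nn_integral_exp_eq_expm1_plus_1:
  assumes "prob_space N" "sets N = sets borel" "AE x in N. 0 \<le> x" "0 \<le> d"
  shows "(\<integral>\<^sup>+x. ennreal (exp (d * x)) \<partial>N) = (\<integral>\<^sup>+x. ennreal (exp (d * x) - 1) \<partial>N) + 1"
proof -
  interpret prob_space N by (rule assms(1))
  have [measurable]: "(\<lambda>x. ennreal (exp (d * x) - 1)) \<in> borel_measurable N"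
    by (subst measurable_cong_sets[OF assms(2) refl]) measurable
  have "(\<integral>\<^sup>+x. ennreal (exp (d * x)) \<partial>N) = (\<integral>\<^sup>+x. ennreal (exp (d * x) - 1) + 1 \<partial>N)"
    using assms(3)
  proof (intro nn_integral_cong_AE, eventually_elim)
    case (elim x)
    hence "1 \<le> exp (d * x)" using assms(4) by simp
    thus ?case by (simp add: ennreal_eq_1_plus_minus_1[of "exp (d * x)"] add.commute)
  qed
  also have "\<dots> = (\<integral>\<^sup>+x. ennreal (exp (d * x) - 1) \<partial>N) + 1"
    by (subst nn_integral_add) (auto simp: emeasure_space_1)
  finally show ?thesis .
qed

(* The Gronwall identity that closes the induction on the number of jumps. *)
lemma nn_integral_exp_growth:
  assumes "0 \<le> c" "t \<le> u"
  shows "1 + ennreal c * (\<integral>\<^sup>+s. ennreal (exp (c * (s - t))) * indicator {t..u} s \<partial>lborel)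
    = ennreal (exp (c * (u - t)))"
proof -
  have "ennreal c * (\<integral>\<^sup>+s. ennreal (exp (c * (s - t))) * indicator {t..u} s \<partial>lborel)
      = (\<integral>\<^sup>+s\<in>{t..u}. ennreal (c * exp (c * (s - t))) \<partial>lborel)"
    using assms(1) by (subst nn_integral_cmult[symmetric]) (auto simp: ennreal_mult mult.assoc)
  also have "\<dots> = ennreal (exp (c * (u - t)) - exp (c * (t - t)))"
    using assms by (intro nn_integral_FTC_Icc[where F = "\<lambda>s. exp (c * (s - t))"])
      (auto intro!: derivative_eq_intros)
  finally show ?thesis
    using assms ennreal_eq_1_plus_minus_1[of "exp (c * (u - t))"] by simp
qed

lemma nn_integral_cmult_Fubini:
  fixes f :: "'a \<Rightarrow> 'b \<Rightarrow> ennreal"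
  assumes "sigma_finite_measure M" "sigma_finite_measure N"
    and f: "(\<lambda>(x, y). f x y) \<in> borel_measurable (M \<Otimes>\<^sub>M N)"
  shows "(\<integral>\<^sup>+x. (\<integral>\<^sup>+y. c * f x y \<partial>N) \<partial>M) = c * (\<integral>\<^sup>+y. (\<integral>\<^sup>+x. f x y \<partial>M) \<partial>N)"
proof -
  interpret pair_sigma_finite M N
    using assms(1,2) by (rule pair_sigma_finite.intro)
  have [measurable]: "(\<lambda>(x, y). f x y) \<in> borel_measurable (M \<Otimes>\<^sub>M N)" by (fact f)
  have "(\<integral>\<^sup>+x. (\<integral>\<^sup>+y. c * f x y \<partial>N) \<partial>M) = (\<integral>\<^sup>+x. c * (\<integral>\<^sup>+y. f x y \<partial>N) \<partial>M)"
    using measurable_compose[OF measurable_Pair1' f] by (intro nn_integral_cong nn_integral_cmult) simp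
  also have "\<dots> = c * (\<integral>\<^sup>+x. (\<integral>\<^sup>+y. f x y \<partial>N) \<partial>M)"
    by (rule nn_integral_cmult) measurable
  finally show ?thesis
    using Fubini'[OF f] by simp
qed

section \<open>Conditional expectations of complex random variables\<close>

lemma borel_measurable_cnj [measurable]: "cnj \<in> borel_measurable borel"
  by (intro borel_measurable_continuous_onI continuous_on_cnj continuous_on_id)

lemma Re_sgn_cnj_mult_self: "Re (sgn (cnj z) * z) = cmod z"
proof (cases "z = 0")
  case False
  have "sgn (cnj z) * z = (cnj z * z) /\<^sub>R cmod z"
    by (simp add: sgn_div_norm)
  also have "cnj z * z = complex_of_real ((cmod z)\<^sup>2)"
    by (simp add: complex_norm_square[symmetric] mult.commute)
  finally show ?thesis using False by (simp add: power2_eq_square)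
qed simp

lemma integrable_indicator_mult:
  fixes g :: "'a \<Rightarrow> real"
  shows "B \<in> sets M \<Longrightarrow> integrable M g \<Longrightarrow> integrable M (\<lambda>x. indicator B x * g x)"
  using integrable_mult_indicator[of B M g] by simp

lemma integrable_norm_le_1_mult:
  fixes f u :: "'a \<Rightarrow> complex"
  assumes "integrable M f" "u \<in> borel_measurable M" "\<And>x. cmod (u x) \<le> 1"
  shows "integrable M (\<lambda>x. u x * f x)"
  using assms
  by (intro Bochner_Integration.integrable_bound[OF integrable_norm[OF assms(1)]])
    (auto simp: norm_mult intro!: mult_left_le_one_le)

context sigma_finite_subalgebra
begin

lemma cond_exp_complex_measurable [measurable]: "cond_exp_complex M F f \<in> borel_measurable F"
proof -
  have "cond_exp_complex M F f = (\<lambda>x. complex_of_real (real_cond_exp M F (\<lambda>x. Re (f x)) x)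
      + \<i> * complex_of_real (real_cond_exp M F (\<lambda>x. Im (f x)) x))"
    by (simp add: cond_exp_complex_def fun_eq_iff complex_eq_iff)
  thus ?thesis by simp
qed

lemma real_cond_exp_le_const:
  assumes "finite_measure M" and g: "integrable M g"
    and bound: "\<And>B. B \<in> sets F \<Longrightarrow> (\<integral>x. indicator B x * g x \<partial>M) \<le> K * measure M B"
  shows "AE x in M. real_cond_exp M F g x \<le> K"
proof -
  interpret finite_measure M by (rule assms(1))
  let ?h = "real_cond_exp M F g"
  define B where "B = {x\<in>space M. K < ?h x}"
  have "space F = space M" using subalg by (simp add: subalgebra_def)
  hence B: "B \<in> sets F"
    unfolding B_def by (simp only: eq_commute[of "space F"]) measurable
  hence [measurable]: "B \<in> sets M" using subalg by (auto simp: subalgebra_def)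
  have h_int: "integrable M ?h" using g by (rule real_cond_exp_int(1))
  have "integrable M (indicator B :: 'a \<Rightarrow> real)"
    by (intro integrable_real_indicator) (auto simp: emeasure_eq_measure)
  have int_B: "integrable M (\<lambda>x. indicator B x * ?h x - indicator B x * K)"
    using h_int by (intro Bochner_Integration.integrable_diff integrable_indicator_mult) auto
  have "(\<integral>x. indicator B x * ?h x - indicator B x * K \<partial>M) = (\<integral>x. indicator B x * g x \<partial>M) - K * measure M B"
    using h_int g B \<open>integrable M (indicator B)\<close> by (subst Bochner_Integration.integral_diff)
      (auto intro!: real_cond_exp_intg(2) integrable_indicator_mult)
  also have "\<dots> \<le> 0" using bound[OF B] by simp
  finally have "(\<integral>x. indicator B x * (?h x - K) \<partial>M) = 0"
    using int_B by (intro antisym integral_nonneg_AE) (auto simp: B_def right_diff_distrib split: split_indicator)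
  hence "AE x in M. indicator B x * (?h x - K) = 0"
    using int_B by (subst (asm) integral_nonneg_eq_0_iff_AE)
      (auto simp: B_def right_diff_distrib split: split_indicator)
  with AE_space show ?thesis
    by eventually_elim (auto simp: B_def split: split_indicator_asm)
qed

lemma real_cond_exp_Re_sgn_cnj_mult:
  fixes f :: "'a \<Rightarrow> complex"
  assumes "integrable M f"
  shows "AE x in M. real_cond_exp M F (\<lambda>x. Re (sgn (cnj (cond_exp_complex M F f x)) * f x)) x
    = cmod (cond_exp_complex M F f x)"
proof -
  have [measurable]: "f \<in> borel_measurable M" using assms by auto
  let ?c = "cond_exp_complex M F f"
  define u where "u x = sgn (cnj (?c x))" for x
  have [measurable]: "u \<in> borel_measurable F"
    unfolding u_def by measurable
  hence [measurable]: "u \<in> borel_measurable M" by (rule measurable_from_subalg[OF subalg])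
  have "cmod (u x) \<le> 1" for x
    by (simp add: u_def norm_sgn)
  hence "\<bar>Re (u x)\<bar> \<le> 1" "\<bar>Im (u x)\<bar> \<le> 1" for x
    using abs_Re_le_cmod[of "u x"] abs_Im_le_cmod[of "u x"] by (meson order_trans)+
  hence "integrable M (\<lambda>x. Re (complex_of_real (Re (u x)) * f x))"
    and "integrable M (\<lambda>x. Im (complex_of_real (Im (u x)) * f x))"
    by (intro integrable_Re integrable_Im integrable_norm_le_1_mult[OF assms]; simp)+
  hence int_Re: "integrable M (\<lambda>x. Re (u x) * Re (f x))" and int_Im: "integrable M (\<lambda>x. Im (u x) * Im (f x))"
    by simp_all
  have "AE x in M. real_cond_exp M F (\<lambda>x. Re (u x * f x)) x
      = real_cond_exp M F (\<lambda>x. Re (u x) * Re (f x)) x - real_cond_exp M F (\<lambda>x. Im (u x) * Im (f x)) x"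
    using real_cond_exp_diff[OF int_Re int_Im] by simp
  moreover have "AE x in M. real_cond_exp M F (\<lambda>x. Re (u x) * Re (f x)) x = Re (u x) * Re (?c x)"
    using real_cond_exp_mult[of "\<lambda>x. Re (u x)" "\<lambda>x. Re (f x)"] int_Re by (simp add: cond_exp_complex_def)
  moreover have "AE x in M. real_cond_exp M F (\<lambda>x. Im (u x) * Im (f x)) x = Im (u x) * Im (?c x)"
    using real_cond_exp_mult[of "\<lambda>x. Im (u x)" "\<lambda>x. Im (f x)"] int_Im by (simp add: cond_exp_complex_def)
  ultimately show ?thesis
  proof eventually_elim
    case (elim x)
    thus ?case using Re_sgn_cnj_mult_self[of "?c x"] by (simp add: u_def)
  qed
qed

(* Rotating f by the F-measurable unit sgn (cnj E[f|F]) reduces the claim to the real case. *)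
lemma cmod_cond_exp_complex_le:
  fixes f :: "'a \<Rightarrow> complex"
  assumes "finite_measure M" and f[measurable]: "f \<in> borel_measurable M" and "0 \<le> K"
    and bound: "\<And>B. B \<in> sets F \<Longrightarrow> (\<integral>\<^sup>+x. indicator B x * ennreal (cmod (f x)) \<partial>M) \<le> emeasure M B * ennreal K"
  shows "AE x in M. cmod (cond_exp_complex M F f x) \<le> K"
proof -
  interpret finite_measure M by (rule assms(1))
  have F_sets: "B \<in> sets F \<Longrightarrow> B \<in> sets M" for B using subalg by (auto simp: subalgebra_def)
  have norm_bound: "(\<integral>\<^sup>+x. ennreal (indicator B x * cmod (f x)) \<partial>M) \<le> ennreal (K * measure M B)"
    if B: "B \<in> sets F" for B
  proof -
    have "(\<integral>\<^sup>+x. ennreal (indicator B x * cmod (f x)) \<partial>M) = (\<integral>\<^sup>+x. indicator B x * ennreal (cmod (f x)) \<partial>M)"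
      by (intro nn_integral_cong) (simp split: split_indicator)
    also have "\<dots> \<le> ennreal (K * measure M B)"
      using bound[OF B] \<open>0 \<le> K\<close> by (simp add: emeasure_eq_measure ennreal_mult mult.commute)
    finally show ?thesis .
  qed
  have "space M \<in> sets F" using subalg sets.top[of F] by (simp add: subalgebra_def)
  hence "(\<integral>\<^sup>+x. ennreal (indicator (space M) x * cmod (f x)) \<partial>M) < \<infinity>"
    by (rule le_less_trans[OF norm_bound]) simp
  moreover have "(\<integral>\<^sup>+x. ennreal (indicator (space M) x * cmod (f x)) \<partial>M) = (\<integral>\<^sup>+x. ennreal (cmod (f x)) \<partial>M)"
    by (intro nn_integral_cong) simp
  ultimately have f_int: "integrable M f"
    by (simp add: integrable_iff_bounded)
  let ?g = "\<lambda>x. Re (sgn (cnj (cond_exp_complex M F f x)) * f x)"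
  have [measurable]: "cond_exp_complex M F f \<in> borel_measurable M"
    by (rule measurable_from_subalg[OF subalg cond_exp_complex_measurable])
  have sgn_mult_le: "cmod (sgn w * z) \<le> cmod z" for w z :: complex
    by (simp add: norm_mult norm_sgn)
  have g_le: "?g x \<le> cmod (f x)" for x
    by (rule order_trans[OF complex_Re_le_cmod sgn_mult_le])
  have "integrable M ?g"
  proof (rule Bochner_Integration.integrable_bound[OF integrable_norm[OF f_int]])
    show "?g \<in> borel_measurable M" by measurable
    show "AE x in M. norm (?g x) \<le> norm (cmod (f x))"
      by (intro AE_I2, simp only: real_norm_def abs_norm_cancel, rule order_trans[OF abs_Re_le_cmod sgn_mult_le])
  qed
  hence "AE x in M. real_cond_exp M F ?g x \<le> K"
  proof (rule real_cond_exp_le_const[OF assms(1)])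
    fix B assume B: "B \<in> sets F"
    have "(\<integral>x. indicator B x * ?g x \<partial>M) \<le> (\<integral>x. indicator B x * cmod (f x) \<partial>M)"
      using B F_sets integrable_norm[OF f_int] \<open>integrable M ?g\<close> g_le
      by (intro integral_mono integrable_indicator_mult) (auto split: split_indicator)
    also have "\<dots> \<le> K * measure M B"
      using norm_bound[OF B] \<open>0 \<le> K\<close> by (intro integral_real_bounded) auto
    finally show "(\<integral>x. indicator B x * ?g x \<partial>M) \<le> K * measure M B" .
  qed
  with real_cond_exp_Re_sgn_cnj_mult[OF f_int] show ?thesis
    by eventually_elim simp
qed

end

section \<open>Exponential products along a jump path\<close>

(* With J = {t<..u} this is Q_m(u); with J = {t<..<s} it is the left limit Q_m(s-). *)
definition jump_exp_prod :: "(nat \<Rightarrow> ereal) \<Rightarrow> (nat \<Rightarrow> real) \<Rightarrow> real \<Rightarrow> ereal set \<Rightarrow> nat \<Rightarrow> ennreal"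
  where "jump_exp_prod T Y d J m = (\<Prod>j<m. if T j \<in> J then ennreal (exp (d * Y j)) else 1)"

locale jump_path =
  fixes T :: "nat \<Rightarrow> ereal" and Y :: "nat \<Rightarrow> real" and d :: real
  assumes T_Suc: "T k \<le> T (Suc k)"
    and T_strict: "T k < \<infinity> \<Longrightarrow> T k < T (Suc k)"
    and Y_pos: "T k < \<infinity> \<Longrightarrow> 0 < Y k"
    and d_nonneg: "0 \<le> d"
begin

abbreviation Q :: "ereal set \<Rightarrow> nat \<Rightarrow> ennreal" where
  "Q \<equiv> jump_exp_prod T Y d"

lemma T_mono: "j \<le> k \<Longrightarrow> T j \<le> T k"
  using T_Suc by (rule lift_Suc_mono_le)

lemma T_less: assumes "j < k" "T k < \<infinity>" shows "T j < T k"
proof -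
  have "T j < \<infinity>" using T_mono[of j k] assms by (auto intro: order.strict_trans1)
  hence "T j < T (Suc j)" by (rule T_strict)
  also have "\<dots> \<le> T k" using T_mono assms(1) by simp
  finally show ?thesis .
qed

lemma exp_Y_ge_1: "T j < \<infinity> \<Longrightarrow> 1 \<le> exp (d * Y j)"
  using Y_pos[of j] d_nonneg by simp

lemma exp_factor_ge_1: "\<infinity> \<notin> J \<Longrightarrow> 1 \<le> (if T j \<in> J then ennreal (exp (d * Y j)) else 1)"
  using exp_Y_ge_1[of j] by (cases "T j") auto

lemma jump_exp_prod_mono_window:
  assumes "I \<subseteq> J" "\<infinity> \<notin> J"
  shows "Q I m \<le> Q J m"
  unfolding jump_exp_prod_def
proof (rule prod_mono_ennreal)
  fix j
  show "(if T j \<in> I then ennreal (exp (d * Y j)) else 1) \<le> (if T j \<in> J then ennreal (exp (d * Y j)) else 1)"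
    using assms(1) exp_factor_ge_1[OF assms(2), of j] by auto
qed

lemma jump_exp_prod_mono:
  assumes "\<infinity> \<notin> J" "k \<le> m"
  shows "Q J k \<le> Q J m"
proof -
  have "Q J n * 1 \<le> Q J n * (if T n \<in> J then ennreal (exp (d * Y n)) else 1)" for n
    using exp_factor_ge_1[OF assms(1)] by (rule mult_left_mono) simp
  hence "Q J n \<le> Q J (Suc n)" for n
    by (simp add: jump_exp_prod_def)
  thus ?thesis
    using lift_Suc_mono_le[of "Q J"] assms(2) by blast
qed

lemma jump_exp_prod_Suc:
  assumes "\<infinity> \<notin> J"
  shows "Q J (Suc m) = Q J m + (if T m \<in> J then ennreal (exp (d * Y m) - 1) * Q (J \<inter> {..<T m}) m else 0)"
proof (cases "T m \<in> J")
  case True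
  hence fin: "T m < \<infinity>" using assms by (cases "T m") auto
  have before: "Q (J \<inter> {..<T m}) m = Q J m"
    unfolding jump_exp_prod_def using T_less[OF _ fin] by (intro prod.cong) auto
  have "Q J (Suc m) = Q J m * (1 + ennreal (exp (d * Y m) - 1))"
    using True ennreal_eq_1_plus_minus_1[OF exp_Y_ge_1[OF fin]] by (simp add: jump_exp_prod_def)
  thus ?thesis
    using True by (simp only: before distrib_left mult_1_right mult_1_left mult.commute if_True)
qed (simp add: jump_exp_prod_def)

lemma jump_exp_prod_eq_sum:
  assumes "\<infinity> \<notin> J"
  shows "Q J m = 1 + (\<Sum>k<m. if T k \<in> J then ennreal (exp (d * Y k) - 1) * Q (J \<inter> {..<T k}) k else 0)"
  by (induction m) (simp_all add: jump_exp_prod_Suc[OF assms] add.assoc, simp add: jump_exp_prod_def)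

lemma jump_exp_prod_le_suminf:
  "Q {ereal t<..ereal u} (Suc n) \<le> 1 + (\<Sum>k. if T k < \<infinity> then
     indicator {t<..u} (real_of_ereal (T k)) * Q {ereal t<..<ereal (real_of_ereal (T k))} n
       * ennreal (exp (d * Y k) - 1) else 0)"
    (is "_ \<le> 1 + (\<Sum>k. ?term k)")
proof -
  let ?J = "{ereal t<..ereal u}"
  let ?summand = "\<lambda>k. if T k \<in> ?J then ennreal (exp (d * Y k) - 1) * Q (?J \<inter> {..<T k}) k else 0"
  have summand_le: "?summand k \<le> ?term k" if "k < Suc n" for k
  proof (cases "T k \<in> ?J")
    case True
    then obtain r where r: "T k = ereal r" "t < r" "r \<le> u" by (cases "T k") auto
    have "Q (?J \<inter> {..<T k}) k \<le> Q {ereal t<..<T k} k"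
      by (rule jump_exp_prod_mono_window) auto
    also have "\<dots> \<le> Q {ereal t<..<T k} n"
      using that by (intro jump_exp_prod_mono) auto
    finally show ?thesis
      using True r by (simp add: mult.commute mult_left_mono)
  next
    case False
    thus ?thesis by (simp only: if_not_P if_False zero_le)
  qed
  have "Q ?J (Suc n) = 1 + (\<Sum>k<Suc n. ?summand k)"
    by (rule jump_exp_prod_eq_sum) simp
  also have "\<dots> \<le> 1 + (\<Sum>k<Suc n. ?term k)"
    using summand_le by (intro add_left_mono sum_mono) simp
  also have "\<dots> \<le> 1 + (\<Sum>k. ?term k)"
    by (intro add_left_mono sum_le_suminf) auto
  finally show ?thesis .
qed

lemma jump_exp_prod_before_eq_rat:
  assumes "t < s"
  shows "\<exists>q\<in>\<rat>. t \<le> q \<and> q < s \<and> Q {ereal t<..ereal q} m = Q {ereal t<..<ereal s} m"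
proof -
  have real_in_window: "x = ereal (real_of_ereal x) \<and> real_of_ereal x < s"
    if "ereal t < x" "x < ereal s" for x
    using that by (cases x) auto
  define B where "B = insert t ((\<lambda>j. real_of_ereal (T j)) ` {j. j < m \<and> T j \<in> {ereal t<..<ereal s}})"
  have "finite B" unfolding B_def by simp
  moreover have "b < s" if "b \<in> B" for b
    using that assms real_in_window by (auto simp: B_def)
  ultimately have "Max B < s" by (simp add: B_def)
  then obtain q where q: "q \<in> \<rat>" "Max B < q" "q < s" using Rats_dense_in_real by blast
  have "t \<le> Max B" using \<open>finite B\<close> by (simp add: B_def)
  have "T j \<in> {ereal t<..ereal q} \<longleftrightarrow> T j \<in> {ereal t<..<ereal s}" if "j < m" for j
  proof
    assume window: "T j \<in> {ereal t<..<ereal s}"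
    hence "real_of_ereal (T j) \<le> Max B" using that \<open>finite B\<close> by (auto simp: B_def)
    with q(2) window real_in_window[of "T j"] show "T j \<in> {ereal t<..ereal q}"
      by (metis greaterThanAtMost_iff greaterThanLessThan_iff ereal_less_eq(3) less_le_not_le order.strict_trans1)
  qed (use q(3) in \<open>auto intro: order.strict_trans1\<close>)
  hence "Q {ereal t<..ereal q} m = Q {ereal t<..<ereal s} m"
    unfolding jump_exp_prod_def by (intro prod.cong) auto
  with q \<open>t \<le> Max B\<close> show ?thesis by (intro bexI[of _ q]) auto
qed

(* s -> Q_m(s-) is left-continuous, hence a countable supremum of adapted step processes:
   this is how its predictability is proved. *)
lemma indicator_jump_exp_prod_before_eq_SUP:
  "indicator {t<..u} s * Q {ereal t<..<ereal s} m
     = (SUP q\<in>\<rat> \<inter> {t..u}. Q {ereal t<..ereal q} m * indicator {q<..u} s)"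
proof (rule antisym)
  show "indicator {t<..u} s * Q {ereal t<..<ereal s} m
     \<le> (SUP q\<in>\<rat> \<inter> {t..u}. Q {ereal t<..ereal q} m * indicator {q<..u} s)"
  proof (cases "s \<in> {t<..u}")
    case True
    then obtain q where "q \<in> \<rat>" "t \<le> q" "q < s" "Q {ereal t<..ereal q} m = Q {ereal t<..<ereal s} m"
      using jump_exp_prod_before_eq_rat[of t s m] by auto
    with True show ?thesis
      by (intro SUP_upper2[of q]) auto
  qed simp
  show "(SUP q\<in>\<rat> \<inter> {t..u}. Q {ereal t<..ereal q} m * indicator {q<..u} s)
     \<le> indicator {t<..u} s * Q {ereal t<..<ereal s} m"
  proof (rule SUP_least)
    fix q assume q: "q \<in> \<rat> \<inter> {t..u}"
    show "Q {ereal t<..ereal q} m * indicator {q<..u} s \<le> indicator {t<..u} s * Q {ereal t<..<ereal s} m"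
    proof (cases "s \<in> {q<..u}")
      case True
      hence "{ereal t<..ereal q} \<subseteq> {ereal t<..<ereal s}"
        by (auto simp: subset_eq intro: le_less_trans)
      hence "Q {ereal t<..ereal q} m \<le> Q {ereal t<..<ereal s} m"
        by (rule jump_exp_prod_mono_window) simp
      thus ?thesis using True q by auto
    qed simp
  qed
qed

lemma exp_sum_le_SUP_jump_exp_prod:
  "ennreal (exp (d * (\<Sum>k\<in>{k. ereal t < T k \<and> T k \<le> ereal u}. Y k)))
     \<le> (SUP m. Q {ereal t<..ereal u} m)"
proof (cases "finite {k. ereal t < T k \<and> T k \<le> ereal u}")
  case True
  let ?W = "{k. ereal t < T k \<and> T k \<le> ereal u}"
  obtain m where m: "?W \<subseteq> {..<m}" using True finite_nat_iff_bounded by blast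
  have "Q {ereal t<..ereal u} m = (\<Prod>j\<in>{..<m} \<inter> ?W. ennreal (exp (d * Y j)))"
    unfolding jump_exp_prod_def by (subst prod.inter_restrict) (auto intro!: prod.cong)
  also have "\<dots> = (\<Prod>j\<in>?W. ennreal (exp (d * Y j)))"
    using m by (simp add: Int_absorb1)
  also have "\<dots> = ennreal (exp (d * (\<Sum>k\<in>?W. Y k)))"
    by (simp add: prod_ennreal exp_sum True sum_distrib_left)
  finally show ?thesis by (metis SUP_upper UNIV_I)
next
  case False
  hence "ennreal (exp (d * (\<Sum>k\<in>{k. ereal t < T k \<and> T k \<le> ereal u}. Y k))) = Q {ereal t<..ereal u} 0"
    by (simp add: jump_exp_prod_def)
  thus ?thesis by (metis SUP_upper UNIV_I)
qed

end

section \<open>Predictable processes and marked point processes\<close>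

locale filtered_measure =
  fixes M :: "'a measure" and F :: "real \<Rightarrow> 'a measure"
  assumes filtration: "mpp_filtration M F"
begin

lemma space_F: "space (F s) = space M"
  using filtration unfolding mpp_filtration_def by blast

lemma sets_F_subset: "sets (F s) \<subseteq> sets M"
  using filtration unfolding mpp_filtration_def by blast

lemma sets_F_mono: "s \<le> u \<Longrightarrow> sets (F s) \<subseteq> sets (F u)"
  using filtration unfolding mpp_filtration_def by blast

abbreviation predictable_rectangles :: "('a \<times> real) set set" where
  "predictable_rectangles \<equiv> {A \<times> {s<..u} | A s u. 0 \<le> s \<and> s \<le> u \<and> A \<in> sets (F s)} \<union>
      {A \<times> {0} | A. A \<in> sets (F 0)}"

lemma predictable_rectangles_subset: "predictable_rectangles \<subseteq> Pow (space M \<times> {0..})"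
  using sets.sets_into_space space_F by fastforce

lemma space_predictable [simp]: "space (predictable M F) = space M \<times> {0..}"
  unfolding predictable_def using predictable_rectangles_subset by simp

lemma sets_predictable: "sets (predictable M F) = sigma_sets (space M \<times> {0..}) predictable_rectangles"
  unfolding predictable_def using predictable_rectangles_subset by simp

lemma predictable_section_adapted:
  assumes "0 \<le> t" "P \<in> sets (predictable M F)"
  shows "{\<omega>\<in>space M. (\<omega>, t) \<in> P} \<in> sets (F t)"
  using assms(2) unfolding sets_predictable
proof (induction rule: sigma_sets.induct)
  case (Basic P)
  then consider A s u where "P = A \<times> {s<..u}" "s \<le> u" "A \<in> sets (F s)"
    | A where "P = A \<times> {0}" "A \<in> sets (F 0)" by blast
  thus ?case
  proof cases
    case 1
    hence "{\<omega>\<in>space M. (\<omega>, t) \<in> P} = (if s < t \<and> t \<le> u then A else {})"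
      using sets.sets_into_space[OF 1(3)] space_F by auto
    thus ?thesis using 1 sets_F_mono[of s t] by auto
  next
    case 2
    hence "{\<omega>\<in>space M. (\<omega>, t) \<in> P} = (if t = 0 then A else {})"
      using sets.sets_into_space[OF 2(2)] space_F by auto
    thus ?thesis using 2 by auto
  qed
next
  case (Compl P)
  have "{\<omega>\<in>space M. (\<omega>, t) \<in> space M \<times> {0..} - P} = space (F t) - {\<omega>\<in>space M. (\<omega>, t) \<in> P}"
    using assms(1) space_F by auto
  thus ?case using Compl by auto
next
  case (Union P)
  have "{\<omega>\<in>space M. (\<omega>, t) \<in> (\<Union>i. P i)} = (\<Union>i. {\<omega>\<in>space M. (\<omega>, t) \<in> P i})" by auto
  thus ?case using Union by auto
qed simp

lemma predictable_process_adapted: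
  assumes g: "(\<lambda>(\<omega>, s). g \<omega> s) \<in> predictable M F \<rightarrow>\<^sub>M N" and "0 \<le> t"
  shows "(\<lambda>\<omega>. g \<omega> t) \<in> F t \<rightarrow>\<^sub>M N"
proof (rule measurableI)
  fix B assume "B \<in> sets N"
  hence "{\<omega>\<in>space M. (\<omega>, t) \<in> (\<lambda>(\<omega>, s). g \<omega> s) -` B \<inter> space (predictable M F)} \<in> sets (F t)"
    using measurable_sets[OF g] \<open>0 \<le> t\<close> by (intro predictable_section_adapted) auto
  moreover have "{\<omega>\<in>space M. (\<omega>, t) \<in> (\<lambda>(\<omega>, s). g \<omega> s) -` B \<inter> space (predictable M F)}
      = (\<lambda>\<omega>. g \<omega> t) -` B \<inter> space (F t)"
    using \<open>0 \<le> t\<close> space_F by auto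
  ultimately show "(\<lambda>\<omega>. g \<omega> t) -` B \<inter> space (F t) \<in> sets (F t)" by simp
next
  fix \<omega> assume "\<omega> \<in> space (F t)"
  thus "g \<omega> t \<in> space N"
    using measurable_space[OF g, of "(\<omega>, t)"] \<open>0 \<le> t\<close> space_F by simp
qed

lemma adapted_times_indicator_predictable:
  fixes f :: "'a \<Rightarrow> ennreal"
  assumes "0 \<le> q" "q \<le> u" and f[measurable]: "f \<in> borel_measurable (F q)"
  shows "(\<lambda>(\<omega>, s). f \<omega> * indicator {q<..u} s) \<in> borel_measurable (predictable M F)"
proof (rule borel_measurableI_greater)
  fix y :: ennreal
  have "{\<omega>\<in>space (F q). y < f \<omega>} \<in> sets (F q)" by measurable
  hence "{\<omega>\<in>space M. y < f \<omega>} \<times> {q<..u} \<in> sets (predictable M F)"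
    unfolding sets_predictable space_F using assms(1,2) by (intro sigma_sets.Basic) blast
  moreover have "{x \<in> space (predictable M F). y < (\<lambda>(\<omega>, s). f \<omega> * indicator {q<..u} s) x}
      = {\<omega>\<in>space M. y < f \<omega>} \<times> {q<..u}"
    using assms(1) by (auto split: split_indicator split_indicator_asm)
  ultimately show "{x \<in> space (predictable M F). y < (\<lambda>(\<omega>, s). f \<omega> * indicator {q<..u} s) x}
      \<in> sets (predictable M F)" by simp
qed

lemma sets_vimage_algebra_adapted:
  "g \<in> F s \<rightarrow>\<^sub>M N \<Longrightarrow> sets (vimage_algebra (space M) g N) \<subseteq> sets (F s)"
  by (intro sets_image_in_sets) (simp add: space_F)

lemma sigma_finite_subalgebra_vimage_adapted:
  assumes "finite_measure M" "g \<in> F s \<rightarrow>\<^sub>M N"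
  shows "sigma_finite_subalgebra M (vimage_algebra (space M) g N)"
  using sets_vimage_algebra_adapted[OF assms(2)] sets_F_subset assms(1)
  by (intro finite_measure_subalgebra_is_sigma_finite)
    (auto simp: finite_measure_subalgebra_def finite_measure_subalgebra_axioms_def subalgebra_def)

end

locale mpp_space = filtered_measure +
  fixes Tk :: "nat \<Rightarrow> 'a \<Rightarrow> ereal" and X :: "nat \<Rightarrow> 'a \<Rightarrow> real"
  assumes mpp: "marked_point_process M F Tk X"
begin

lemma Tk_measurable [measurable]: "Tk k \<in> borel_measurable M"
  and X_measurable [measurable]: "X k \<in> borel_measurable M"
  using mpp unfolding marked_point_process_def by auto

lemma jump_mark_adapted: "B \<in> sets borel \<Longrightarrow> {\<omega>\<in>space M. Tk k \<omega> \<le> ereal s \<and> X k \<omega> \<in> B} \<in> sets (F s)"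
  using mpp unfolding marked_point_process_def by auto

lemma jump_path_at: "\<omega> \<in> space M \<Longrightarrow> 0 \<le> d \<Longrightarrow> jump_path (\<lambda>j. Tk j \<omega>) (\<lambda>j. X j \<omega>) d"
  using mpp unfolding marked_point_process_def jump_path_def by auto

abbreviation path_exp_prod :: "real \<Rightarrow> ereal set \<Rightarrow> nat \<Rightarrow> 'a \<Rightarrow> ennreal" where
  "path_exp_prod d J m \<omega> \<equiv> jump_exp_prod (\<lambda>j. Tk j \<omega>) (\<lambda>j. X j \<omega>) d J m"

lemma path_exp_prod_measurable [measurable]:
  "path_exp_prod d {ereal t<..ereal u} m \<in> borel_measurable M"
  unfolding jump_exp_prod_def greaterThanAtMost_iff by measurable

lemma path_exp_prod_before_measurable [measurable]:
  "(\<lambda>(\<omega>, s). path_exp_prod d {ereal t<..<ereal s} m \<omega>) \<in> borel_measurable (M \<Otimes>\<^sub>M lborel)"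
  unfolding jump_exp_prod_def greaterThanLessThan_iff by measurable

lemma jump_factor_adapted:
  assumes "t \<le> q"
  shows "(\<lambda>\<omega>. if Tk j \<omega> \<in> {ereal t<..ereal q} then ennreal (exp (d * X j \<omega>)) else 1) \<in> borel_measurable (F q)"
proof (rule measurableI)
  fix B :: "ennreal set" assume B: "B \<in> sets borel"
  let ?factor = "\<lambda>x. ennreal (exp (d * x))"
  have "?factor -` B \<in> sets borel"
    using measurable_sets[of ?factor borel borel B] B by simp
  hence "{\<omega>\<in>space M. Tk j \<omega> \<le> ereal q \<and> X j \<omega> \<in> ?factor -` B} \<in> sets (F q)"
    by (rule jump_mark_adapted)
  moreover have "{\<omega>\<in>space M. Tk j \<omega> \<le> ereal t} \<in> sets (F q)"
    using jump_mark_adapted[of UNIV j t] sets_F_mono[OF assms] by auto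
  moreover have "{\<omega>\<in>space M. Tk j \<omega> \<le> ereal q} \<in> sets (F q)"
    using jump_mark_adapted[of UNIV j q] by simp
  moreover have "(\<lambda>\<omega>. if Tk j \<omega> \<in> {ereal t<..ereal q} then ?factor (X j \<omega>) else 1) -` B \<inter> space (F q)
     = ({\<omega>\<in>space M. Tk j \<omega> \<le> ereal q \<and> X j \<omega> \<in> ?factor -` B} - {\<omega>\<in>space M. Tk j \<omega> \<le> ereal t}) \<union>
       (if 1 \<in> B then space M - ({\<omega>\<in>space M. Tk j \<omega> \<le> ereal q} - {\<omega>\<in>space M. Tk j \<omega> \<le> ereal t}) else {})"
    unfolding space_F by (auto simp: not_le split: if_splits)
  ultimately show "(\<lambda>\<omega>. if Tk j \<omega> \<in> {ereal t<..ereal q} then ?factor (X j \<omega>) else 1) -` B \<inter> space (F q) \<in> sets (F q)"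
    using sets.top[of "F q"] unfolding space_F by auto
qed simp

lemma path_exp_prod_adapted:
  assumes "t \<le> q"
  shows "path_exp_prod d {ereal t<..ereal q} m \<in> borel_measurable (F q)"
  unfolding jump_exp_prod_def by (rule borel_measurable_prod_ennreal, rule jump_factor_adapted[OF assms])

lemma indicator_path_exp_prod_before_predictable:
  assumes "0 \<le> t" "0 \<le> d" "A \<in> sets (F t)"
  shows "(\<lambda>(\<omega>, s). indicator A \<omega> * (indicator {t<..u} s * path_exp_prod d {ereal t<..<ereal s} m \<omega>))
     \<in> borel_measurable (predictable M F)"
proof -
  let ?term = "\<lambda>q (\<omega>, s). indicator A \<omega> * path_exp_prod d {ereal t<..ereal q} m \<omega> * indicator {q<..u} s"
  have "?term q \<in> borel_measurable (predictable M F)" if q: "q \<in> \<rat> \<inter> {t..u}" for q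
  proof -
    have "A \<in> sets (F q)" using assms(3) sets_F_mono[of t q] q by auto
    moreover have "path_exp_prod d {ereal t<..ereal q} m \<in> borel_measurable (F q)"
      using q by (intro path_exp_prod_adapted) simp
    ultimately have "(\<lambda>\<omega>. indicator A \<omega> * path_exp_prod d {ereal t<..ereal q} m \<omega>) \<in> borel_measurable (F q)"
      by measurable
    thus ?thesis
      using q assms(1) by (intro adapted_times_indicator_predictable[where q = q]) auto
  qed
  hence "(\<lambda>x. SUP q\<in>\<rat> \<inter> {t..u}. ?term q x) \<in> borel_measurable (predictable M F)"
    by (intro borel_measurable_SUP) (auto intro: countable_rat)
  moreover have "(SUP q\<in>\<rat> \<inter> {t..u}. ?term q (\<omega>, s))
      = indicator A \<omega> * (indicator {t<..u} s * path_exp_prod d {ereal t<..<ereal s} m \<omega>)"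
    if "(\<omega>, s) \<in> space (predictable M F)" for \<omega> s
    using that jump_path.indicator_jump_exp_prod_before_eq_SUP[OF jump_path_at[OF _ assms(2)], of \<omega> t u s m]
    by (simp add: SUP_mult_left_ennreal mult.assoc)
  ultimately show ?thesis
    by (subst measurable_cong[where g = "\<lambda>x. SUP q\<in>\<rat> \<inter> {t..u}. ?term q x"]) auto
qed

(* An infinite window has sum 0 by convention; a finite one is an eventually zero series. *)
lemma window_sum_measurable [measurable]:
  "(\<lambda>\<omega>. \<Sum>k\<in>{k. ereal t < Tk k \<omega> \<and> Tk k \<omega> \<le> ereal u}. X k \<omega>) \<in> borel_measurable M"
proof -
  let ?W = "\<lambda>\<omega>. {k. ereal t < Tk k \<omega> \<and> Tk k \<omega> \<le> ereal u}"
  have "(\<Sum>k\<in>?W \<omega>. X k \<omega>)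
      = (if \<exists>n. \<forall>k\<ge>n. k \<notin> ?W \<omega> then \<Sum>k. if k \<in> ?W \<omega> then X k \<omega> else 0 else 0)" for \<omega>
  proof (cases "finite (?W \<omega>)")
    case True
    hence "(\<Sum>k. if k \<in> ?W \<omega> then X k \<omega> else 0) = (\<Sum>k\<in>?W \<omega>. X k \<omega>)"
      by (subst suminf_finite[of "?W \<omega>"]) auto
    moreover have "\<exists>n. \<forall>k\<ge>n. k \<notin> ?W \<omega>"
      using True finite_nat_set_iff_bounded by (meson leD)
    ultimately show ?thesis by simp
  next
    case False
    hence "\<not> (\<exists>n. \<forall>k\<ge>n. k \<notin> ?W \<omega>)"
      by (metis (no_types, lifting) finite_nat_set_iff_bounded not_le)
    with False show ?thesis
      using sum.infinite[OF False] by (simp only: if_not_P if_False)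
  qed
  thus ?thesis
    by (subst measurable_cong[OF refl]) (simp only:, measurable)
qed

lemma nn_integral_indicator_path_exp_prod_before_le:
  assumes [measurable]: "A \<in> sets M" and "0 \<le> d"
  shows "(\<integral>\<^sup>+\<omega>. indicator A \<omega> * (indicator {t<..u} s * path_exp_prod d {ereal t<..<ereal s} m \<omega>) \<partial>M)
     \<le> indicator {t<..u} s * (\<integral>\<^sup>+\<omega>. indicator A \<omega> * path_exp_prod d {ereal t<..ereal s} m \<omega> \<partial>M)"
proof -
  have "path_exp_prod d {ereal t<..<ereal s} m \<omega> \<le> path_exp_prod d {ereal t<..ereal s} m \<omega>" if "\<omega> \<in> space M" for \<omega>
    by (intro jump_path.jump_exp_prod_mono_window[OF jump_path_at[OF that \<open>0 \<le> d\<close>]]) auto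
  hence "(\<integral>\<^sup>+\<omega>. indicator A \<omega> * (indicator {t<..u} s * path_exp_prod d {ereal t<..<ereal s} m \<omega>) \<partial>M)
      \<le> (\<integral>\<^sup>+\<omega>. indicator {t<..u} s * (indicator A \<omega> * path_exp_prod d {ereal t<..ereal s} m \<omega>) \<partial>M)"
    by (intro nn_integral_mono) (simp add: mult_left_mono mult.left_commute)
  also have "\<dots> = indicator {t<..u} s * (\<integral>\<^sup>+\<omega>. indicator A \<omega> * path_exp_prod d {ereal t<..ereal s} m \<omega> \<partial>M)"
    by (rule nn_integral_cmult) measurable
  finally show ?thesis .
qed

lemma nn_integral_indicator_path_exp_prod_Suc_le:
  fixes t u :: real and m :: nat
  assumes [measurable]: "A \<in> sets M" and "0 \<le> d"
  defines "\<Phi> \<omega> s \<equiv> indicator A \<omega> * (indicator {t<..u} s * path_exp_prod d {ereal t<..<ereal s} m \<omega>)"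
  shows "(\<integral>\<^sup>+\<omega>. indicator A \<omega> * path_exp_prod d {ereal t<..ereal u} (Suc m) \<omega> \<partial>M)
     \<le> emeasure M A + (\<integral>\<^sup>+\<omega>. (\<Sum>k. if Tk k \<omega> < \<infinity>
          then \<Phi> \<omega> (real_of_ereal (Tk k \<omega>)) * ennreal (exp (d * X k \<omega>) - 1) else 0) \<partial>M)"
    (is "_ \<le> _ + (\<integral>\<^sup>+\<omega>. ?jumps \<omega> \<partial>M)")
proof -
  have "indicator A \<omega> * path_exp_prod d {ereal t<..ereal u} (Suc m) \<omega> \<le> indicator A \<omega> + ?jumps \<omega>"
    if "\<omega> \<in> space M" for \<omega>
  proof -
    let ?term = "\<lambda>k. if Tk k \<omega> < \<infinity> then indicator {t<..u} (real_of_ereal (Tk k \<omega>))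
      * path_exp_prod d {ereal t<..<ereal (real_of_ereal (Tk k \<omega>))} m \<omega> * ennreal (exp (d * X k \<omega>) - 1) else 0"
    have "indicator A \<omega> * path_exp_prod d {ereal t<..ereal u} (Suc m) \<omega> \<le> indicator A \<omega> * (1 + (\<Sum>k. ?term k))"
      using jump_path.jump_exp_prod_le_suminf[OF jump_path_at[OF that \<open>0 \<le> d\<close>]] by (rule mult_left_mono) simp
    also have "\<dots> = indicator A \<omega> + (\<Sum>k. indicator A \<omega> * ?term k)"
      by (simp add: distrib_left)
    also have "(\<Sum>k. indicator A \<omega> * ?term k) = ?jumps \<omega>"
      by (rule arg_cong[where f = suminf]) (simp add: fun_eq_iff \<Phi>_def mult.assoc)
    finally show ?thesis .
  qed
  hence "(\<integral>\<^sup>+\<omega>. indicator A \<omega> * path_exp_prod d {ereal t<..ereal u} (Suc m) \<omega> \<partial>M)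
      \<le> (\<integral>\<^sup>+\<omega>. indicator A \<omega> + ?jumps \<omega> \<partial>M)"
    by (intro nn_integral_mono)
  also have "\<dots> = emeasure M A + (\<integral>\<^sup>+\<omega>. ?jumps \<omega> \<partial>M)"
    unfolding \<Phi>_def by (subst nn_integral_add) auto
  finally show ?thesis .
qed

end

section \<open>Exponential moments under a bounded intensity\<close>

locale bounded_intensity_mpp = mpp_space +
  fixes lam :: "'a \<Rightarrow> real \<Rightarrow> real" and nu :: "real \<Rightarrow> real measure"
    and lmin lmax d t Tend :: real
  assumes prob: "prob_space M"
    and nu_kernel: "nu \<in> borel \<rightarrow>\<^sub>M subprob_algebra borel"
    and nu_prob: "\<And>l. 0 \<le> l \<Longrightarrow> prob_space (nu l)"
    and nu_supp: "\<And>l. 0 \<le> l \<Longrightarrow> emeasure (nu l) {..0} = 0"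
    and lmin_nonneg: "0 \<le> lmin" and lmin_le_lmax: "lmin \<le> lmax"
    and moment_finite: "(SUP l\<in>{lmin..lmax}. \<integral>\<^sup>+x. ennreal (exp (d * x)) \<partial>nu l) < \<infinity>"
    and d_nonneg: "0 \<le> d" and t_nonneg: "0 \<le> t"
    and compensator: "has_compensator M F Tk X lam nu"
    and lam_bounded: "\<forall>\<omega>\<in>space M. \<forall>s\<in>{t..Tend}. lam \<omega> s \<in> {lmin..lmax}"
begin

definition moment_sup :: real where
  "moment_sup = enn2real (SUP l\<in>{lmin..lmax}. \<integral>\<^sup>+x. ennreal (exp (d * x)) \<partial>nu l)"

definition growth_rate :: real where
  "growth_rate = lmax * (moment_sup - 1)"

lemma sets_nu [measurable_cong]: "sets (nu l) = sets borel"
  using measurable_space[OF nu_kernel] by (simp add: space_subprob_algebra)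

lemma nn_integral_exp_eq:
  assumes "0 \<le> l"
  shows "(\<integral>\<^sup>+x. ennreal (exp (d * x)) \<partial>nu l) = (\<integral>\<^sup>+x. ennreal (exp (d * x) - 1) \<partial>nu l) + 1"
proof (rule nn_integral_exp_eq_expm1_plus_1[OF nu_prob[OF assms] sets_nu _ d_nonneg])
  show "AE x in nu l. 0 \<le> x"
    using nu_supp[OF assms] sets_nu by (intro AE_I[of _ _ "{..0}"]) (auto simp: not_le)
qed

lemma nn_integral_exp_le_moment_sup:
  assumes "l \<in> {lmin..lmax}"
  shows "(\<integral>\<^sup>+x. ennreal (exp (d * x)) \<partial>nu l) \<le> ennreal moment_sup"
proof -
  have "(\<integral>\<^sup>+x. ennreal (exp (d * x)) \<partial>nu l) \<le> (SUP l\<in>{lmin..lmax}. \<integral>\<^sup>+x. ennreal (exp (d * x)) \<partial>nu l)"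
    using assms by (rule SUP_upper)
  also have "\<dots> = ennreal moment_sup"
    unfolding moment_sup_def using moment_finite by (intro ennreal_enn2real[symmetric]) simp
  finally show ?thesis .
qed

lemma intensity_jump_moment_le_growth_rate:
  assumes l: "l \<in> {lmin..lmax}"
  shows "ennreal l * (\<integral>\<^sup>+x. ennreal (exp (d * x) - 1) \<partial>nu l) \<le> ennreal growth_rate"
proof -
  have "(\<integral>\<^sup>+x. ennreal (exp (d * x) - 1) \<partial>nu l) + 1 \<le> ennreal moment_sup"
    using nn_integral_exp_eq[of l] nn_integral_exp_le_moment_sup[OF l] l lmin_nonneg by simp
  hence "((\<integral>\<^sup>+x. ennreal (exp (d * x) - 1) \<partial>nu l) + 1) - 1 \<le> ennreal moment_sup - 1"
    by (rule ennreal_minus_mono) simp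
  hence "(\<integral>\<^sup>+x. ennreal (exp (d * x) - 1) \<partial>nu l) \<le> ennreal moment_sup - 1"
    by simp
  hence "(\<integral>\<^sup>+x. ennreal (exp (d * x) - 1) \<partial>nu l) \<le> ennreal (moment_sup - 1)"
    using ennreal_minus[of 1 moment_sup] by simp
  hence "ennreal l * (\<integral>\<^sup>+x. ennreal (exp (d * x) - 1) \<partial>nu l) \<le> ennreal lmax * ennreal (moment_sup - 1)"
    using l by (intro mult_mono ennreal_leI) auto
  thus ?thesis
    using lmin_nonneg lmin_le_lmax by (simp add: growth_rate_def ennreal_mult'[symmetric])
qed

lemma moment_sup_ge_1: "1 \<le> moment_sup"
  using nn_integral_exp_eq[of lmin] nn_integral_exp_le_moment_sup[of lmin] lmin_nonneg lmin_le_lmax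
  by (metis atLeastAtMost_iff add.commute ennreal_ge_1 le_iff_add order.trans order_refl)

lemma growth_rate_nonneg: "0 \<le> growth_rate"
  unfolding growth_rate_def using moment_sup_ge_1 lmin_nonneg lmin_le_lmax by simp

lemma nn_integral_jump_sum_le:
  fixes \<Phi> :: "'a \<Rightarrow> real \<Rightarrow> ennreal"
  assumes \<Phi>_predictable: "(\<lambda>(\<omega>, s). \<Phi> \<omega> s) \<in> borel_measurable (predictable M F)"
    and \<Phi>_measurable: "(\<lambda>(\<omega>, s). \<Phi> \<omega> s) \<in> borel_measurable (M \<Otimes>\<^sub>M lborel)"
    and \<Phi>_support: "\<And>\<omega> s. s \<notin> {t..Tend} \<Longrightarrow> \<Phi> \<omega> s = 0"
  shows "(\<integral>\<^sup>+\<omega>. (\<Sum>k. if Tk k \<omega> < \<infinity> then \<Phi> \<omega> (real_of_ereal (Tk k \<omega>)) * ennreal (exp (d * X k \<omega>) - 1) else 0) \<partial>M)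
     \<le> ennreal growth_rate * (\<integral>\<^sup>+s. (\<integral>\<^sup>+\<omega>. \<Phi> \<omega> s \<partial>M) \<partial>lborel)"
proof -
  define H where "H = (\<lambda>((\<omega>::'a, s::real), x::real). \<Phi> \<omega> s * ennreal (exp (d * x) - 1))"
  have [measurable]: "(\<lambda>z. (\<lambda>(\<omega>, s). \<Phi> \<omega> s) (fst z)) \<in> borel_measurable (predictable M F \<Otimes>\<^sub>M borel)"
    using \<Phi>_predictable by (rule measurable_compose[OF measurable_fst])
  have "H = (\<lambda>z. (\<lambda>(\<omega>, s). \<Phi> \<omega> s) (fst z) * ennreal (exp (d * snd z) - 1))"
    unfolding H_def by (auto simp: fun_eq_iff)
  hence "H \<in> borel_measurable (predictable M F \<Otimes>\<^sub>M borel)"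
    by simp
  have "(\<integral>\<^sup>+\<omega>. (\<Sum>k. if Tk k \<omega> < \<infinity> then \<Phi> \<omega> (real_of_ereal (Tk k \<omega>)) * ennreal (exp (d * X k \<omega>) - 1) else 0) \<partial>M)
      = (\<integral>\<^sup>+\<omega>. (\<Sum>k. if Tk k \<omega> < \<infinity> then H ((\<omega>, real_of_ereal (Tk k \<omega>)), X k \<omega>) else 0) \<partial>M)"
    by (simp add: H_def cong: if_cong)
  also have "\<dots> = (\<integral>\<^sup>+\<omega>. (\<integral>\<^sup>+s\<in>{0..}. ennreal (lam \<omega> s) * (\<integral>\<^sup>+x. H ((\<omega>, s), x) \<partial>nu (lam \<omega> s)) \<partial>lborel) \<partial>M)"
    using compensator \<open>H \<in> _\<close> unfolding has_compensator_def by blast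
  also have "\<dots> \<le> (\<integral>\<^sup>+\<omega>. (\<integral>\<^sup>+s. ennreal growth_rate * \<Phi> \<omega> s \<partial>lborel) \<partial>M)"
  proof (intro nn_integral_mono)
    fix \<omega> s assume "\<omega> \<in> space M"
    let ?l = "lam \<omega> s"
    have "ennreal ?l * (\<integral>\<^sup>+x. H ((\<omega>, s), x) \<partial>nu ?l)
        = \<Phi> \<omega> s * (ennreal ?l * (\<integral>\<^sup>+x. ennreal (exp (d * x) - 1) \<partial>nu ?l))"
      unfolding H_def by (simp add: nn_integral_cmult mult.left_commute)
    also have "\<dots> \<le> \<Phi> \<omega> s * ennreal growth_rate"
      using intensity_jump_moment_le_growth_rate[of ?l] lam_bounded \<open>\<omega> \<in> space M\<close>
      by (cases "s \<in> {t..Tend}") (auto simp: \<Phi>_support intro: mult_left_mono)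
    finally show "ennreal ?l * (\<integral>\<^sup>+x. H ((\<omega>, s), x) \<partial>nu ?l) * indicator {0..} s \<le> ennreal growth_rate * \<Phi> \<omega> s"
      by (auto simp: mult.commute split: split_indicator)
  qed
  also have "\<dots> = ennreal growth_rate * (\<integral>\<^sup>+s. (\<integral>\<^sup>+\<omega>. \<Phi> \<omega> s \<partial>M) \<partial>lborel)"
    by (rule nn_integral_cmult_Fubini[OF prob_space_imp_sigma_finite[OF prob]
        lborel.sigma_finite_measure_axioms \<Phi>_measurable])
  finally show ?thesis .
qed

lemma indicator_path_exp_prod_Suc_le:
  assumes A: "A \<in> sets (F t)" and "t \<le> u" "u \<le> Tend"
    and IH: "\<And>s. s \<in> {t<..u} \<Longrightarrow>
      (\<integral>\<^sup>+\<omega>. indicator A \<omega> * path_exp_prod d {ereal t<..ereal s} m \<omega> \<partial>M)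
        \<le> emeasure M A * ennreal (exp (growth_rate * (s - t)))"
  shows "(\<integral>\<^sup>+\<omega>. indicator A \<omega> * path_exp_prod d {ereal t<..ereal u} (Suc m) \<omega> \<partial>M)
     \<le> emeasure M A * ennreal (exp (growth_rate * (u - t)))"
proof -
  have [measurable]: "A \<in> sets M" using A sets_F_subset by auto
  define \<Phi> where "\<Phi> \<omega> s = indicator A \<omega> * (indicator {t<..u} s * path_exp_prod d {ereal t<..<ereal s} m \<omega>)"
    for \<omega> s
  let ?jumps = "\<lambda>\<omega>. \<Sum>k. if Tk k \<omega> < \<infinity>
    then \<Phi> \<omega> (real_of_ereal (Tk k \<omega>)) * ennreal (exp (d * X k \<omega>) - 1) else 0"
  have first_jumps: "(\<integral>\<^sup>+\<omega>. indicator A \<omega> * path_exp_prod d {ereal t<..ereal u} (Suc m) \<omega> \<partial>M)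
      \<le> emeasure M A + (\<integral>\<^sup>+\<omega>. ?jumps \<omega> \<partial>M)"
    unfolding \<Phi>_def by (rule nn_integral_indicator_path_exp_prod_Suc_le[OF \<open>A \<in> sets M\<close> d_nonneg])
  have compensated: "(\<integral>\<^sup>+\<omega>. ?jumps \<omega> \<partial>M) \<le> ennreal growth_rate * (\<integral>\<^sup>+s. (\<integral>\<^sup>+\<omega>. \<Phi> \<omega> s \<partial>M) \<partial>lborel)"
  proof (rule nn_integral_jump_sum_le)
    show "(\<lambda>(\<omega>, s). \<Phi> \<omega> s) \<in> borel_measurable (predictable M F)"
      unfolding \<Phi>_def using indicator_path_exp_prod_before_predictable[OF t_nonneg d_nonneg A] .
    show "(\<lambda>(\<omega>, s). \<Phi> \<omega> s) \<in> borel_measurable (M \<Otimes>\<^sub>M lborel)"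
      unfolding \<Phi>_def by measurable
    show "\<Phi> \<omega> s = 0" if "s \<notin> {t..Tend}" for \<omega> s
      using that \<open>u \<le> Tend\<close> by (auto simp: \<Phi>_def split: split_indicator)
  qed
  have per_time: "(\<integral>\<^sup>+\<omega>. \<Phi> \<omega> s \<partial>M) \<le> emeasure M A * (ennreal (exp (growth_rate * (s - t))) * indicator {t..u} s)"
    for s
  proof (cases "s \<in> {t<..u}")
    case True
    hence "(\<integral>\<^sup>+\<omega>. \<Phi> \<omega> s \<partial>M) \<le> (\<integral>\<^sup>+\<omega>. indicator A \<omega> * path_exp_prod d {ereal t<..ereal s} m \<omega> \<partial>M)"
      using nn_integral_indicator_path_exp_prod_before_le[OF \<open>A \<in> sets M\<close> d_nonneg, of t u s m]
      by (simp add: \<Phi>_def)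
    also have "\<dots> \<le> emeasure M A * ennreal (exp (growth_rate * (s - t)))"
      using True by (rule IH)
    finally show ?thesis using True by simp
  qed (simp add: \<Phi>_def)
  have "(\<integral>\<^sup>+\<omega>. indicator A \<omega> * path_exp_prod d {ereal t<..ereal u} (Suc m) \<omega> \<partial>M)
      \<le> emeasure M A + ennreal growth_rate * (\<integral>\<^sup>+s. (\<integral>\<^sup>+\<omega>. \<Phi> \<omega> s \<partial>M) \<partial>lborel)"
    using first_jumps compensated by (meson add_left_mono order_trans)
  also have "\<dots> \<le> emeasure M A + ennreal growth_rate
      * (\<integral>\<^sup>+s. emeasure M A * (ennreal (exp (growth_rate * (s - t))) * indicator {t..u} s) \<partial>lborel)"
    using per_time by (intro add_left_mono mult_left_mono nn_integral_mono) auto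
  also have "\<dots> = emeasure M A
      * (1 + ennreal growth_rate * (\<integral>\<^sup>+s. ennreal (exp (growth_rate * (s - t))) * indicator {t..u} s \<partial>lborel))"
    by (simp add: nn_integral_cmult distrib_left mult.left_commute)
  also have "\<dots> = emeasure M A * ennreal (exp (growth_rate * (u - t)))"
    using growth_rate_nonneg \<open>t \<le> u\<close> by (simp add: nn_integral_exp_growth)
  finally show ?thesis .
qed

lemma indicator_path_exp_prod_le:
  assumes "A \<in> sets (F t)" "t \<le> u" "u \<le> Tend"
  shows "(\<integral>\<^sup>+\<omega>. indicator A \<omega> * path_exp_prod d {ereal t<..ereal u} m \<omega> \<partial>M)
     \<le> emeasure M A * ennreal (exp (growth_rate * (u - t)))"
  using assms(2,3)
proof (induction m arbitrary: u)
  case 0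
  have "A \<in> sets M" using assms(1) sets_F_subset by auto
  moreover have "emeasure M A * 1 \<le> emeasure M A * ennreal (exp (growth_rate * (u - t)))"
    using growth_rate_nonneg 0 by (intro mult_left_mono) auto
  ultimately show ?case
    by (simp add: jump_exp_prod_def)
next
  case (Suc m)
  thus ?case using assms(1) by (intro indicator_path_exp_prod_Suc_le) auto
qed

lemma indicator_exp_window_sum_le:
  assumes A: "A \<in> sets (F t)" and "t \<le> Tend"
  shows "(\<integral>\<^sup>+\<omega>. indicator A \<omega> * ennreal (exp (d * (\<Sum>k\<in>{k. ereal t < Tk k \<omega> \<and> Tk k \<omega> \<le> ereal Tend}. X k \<omega>))) \<partial>M)
     \<le> emeasure M A * ennreal (exp (growth_rate * (Tend - t)))"
proof -
  have [measurable]: "A \<in> sets M" using A sets_F_subset by auto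
  have "(\<integral>\<^sup>+\<omega>. indicator A \<omega> * ennreal (exp (d * (\<Sum>k\<in>{k. ereal t < Tk k \<omega> \<and> Tk k \<omega> \<le> ereal Tend}. X k \<omega>))) \<partial>M)
      \<le> (\<integral>\<^sup>+\<omega>. (SUP m. indicator A \<omega> * path_exp_prod d {ereal t<..ereal Tend} m \<omega>) \<partial>M)"
    using jump_path.exp_sum_le_SUP_jump_exp_prod[OF jump_path_at[OF _ d_nonneg]]
    by (intro nn_integral_mono) (auto simp: SUP_mult_left_ennreal[symmetric] intro!: mult_left_mono)
  also have "\<dots> = (SUP m. \<integral>\<^sup>+\<omega>. indicator A \<omega> * path_exp_prod d {ereal t<..ereal Tend} m \<omega> \<partial>M)"
  proof (rule nn_integral_monotone_convergence_SUP_AE)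
    show "AE \<omega> in M. indicator A \<omega> * path_exp_prod d {ereal t<..ereal Tend} m \<omega>
        \<le> indicator A \<omega> * path_exp_prod d {ereal t<..ereal Tend} (Suc m) \<omega>" for m
      using jump_path.jump_exp_prod_mono[OF jump_path_at[OF _ d_nonneg]]
      by (intro AE_I2 mult_left_mono) auto
  qed simp
  also have "\<dots> \<le> emeasure M A * ennreal (exp (growth_rate * (Tend - t)))"
    using A \<open>t \<le> Tend\<close> by (intro SUP_least indicator_path_exp_prod_le) auto
  finally show ?thesis .
qed

lemma nn_integral_indicator_discounted_le:
  assumes A: "A \<in> sets (F t)" and "t \<le> Tend"
  shows "(\<integral>\<^sup>+\<omega>. indicator A \<omega> * ennreal (exp (- r * (Tend - t))
      * exp (d * (\<Sum>k\<in>{k. ereal t < Tk k \<omega> \<and> Tk k \<omega> \<le> ereal Tend}. X k \<omega>))) \<partial>M)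
    \<le> emeasure M A * ennreal (exp ((Tend - t) * (growth_rate - r)))"
proof -
  have [measurable]: "A \<in> sets M" using A sets_F_subset by auto
  have "(\<integral>\<^sup>+\<omega>. indicator A \<omega> * ennreal (exp (- r * (Tend - t))
      * exp (d * (\<Sum>k\<in>{k. ereal t < Tk k \<omega> \<and> Tk k \<omega> \<le> ereal Tend}. X k \<omega>))) \<partial>M)
    = ennreal (exp (- r * (Tend - t))) * (\<integral>\<^sup>+\<omega>. indicator A \<omega>
      * ennreal (exp (d * (\<Sum>k\<in>{k. ereal t < Tk k \<omega> \<and> Tk k \<omega> \<le> ereal Tend}. X k \<omega>))) \<partial>M)"
    by (subst nn_integral_cmult[symmetric]) (auto simp: ennreal_mult mult.left_commute intro!: nn_integral_cong)
  also have "\<dots> \<le> ennreal (exp (- r * (Tend - t))) * (emeasure M A * ennreal (exp (growth_rate * (Tend - t))))"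
    using assms by (intro mult_left_mono indicator_exp_window_sum_le) auto
  also have "\<dots> = emeasure M A * ennreal (exp ((Tend - t) * (growth_rate - r)))"
    by (simp add: ennreal_mult[symmetric] mult_exp_exp algebra_simps)
  finally show ?thesis .
qed

end

theorem mainTheorem6:
  fixes M :: "'a measure" and F :: "real \<Rightarrow> 'a measure"
    and Tk :: "nat \<Rightarrow> 'a \<Rightarrow> ereal" and X :: "nat \<Rightarrow> 'a \<Rightarrow> real"
    and lam :: "'a \<Rightarrow> real \<Rightarrow> real" and nu :: "real \<Rightarrow> real measure"
    and lmin lmax s0 \<delta> y r t Tend :: real
  assumes "prob_space M"
    and "mpp_filtration M F"
    and "0 \<le> lmin" and "lmin \<le> lmax"
    and nu_kernel: "nu \<in> borel \<rightarrow>\<^sub>M subprob_algebra borel"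
    and nu_prob: "\<And>l. 0 \<le> l \<Longrightarrow> prob_space (nu l)"
    and nu_supp: "\<And>l. 0 \<le> l \<Longrightarrow> emeasure (nu l) {..0} = 0"
    and "0 < s0"
    and exp_mom: "\<And>s. 0 \<le> s \<Longrightarrow> s < s0 \<Longrightarrow>
          (SUP l\<in>{lmin..lmax}. \<integral>\<^sup>+x. ennreal (exp (s * x)) \<partial>nu l) < \<infinity>"
    and "0 \<le> \<delta>" and "\<delta> < s0"
    and "0 \<le> r"
    and "0 \<le> t" and "t \<le> Tend"
    and "marked_point_process M F Tk X"
    and lam_pred: "(\<lambda>(\<omega>, s). lam \<omega> s) \<in> borel_measurable (predictable M F)"
    and lam_nonneg: "\<And>\<omega> s. 0 \<le> lam \<omega> s"
    and "has_compensator M F Tk X lam nu"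
    and lam_bdd: "\<forall>\<omega>\<in>space M. \<forall>s\<in>{t..Tend}. lam \<omega> s \<in> {lmin..lmax}"
  shows "AE \<omega> in M.
     cmod (cond_exp_complex M (vimage_algebra (space M) (\<lambda>\<omega>. lam \<omega> t) borel)
        (\<lambda>\<omega>. exp (complex_of_real (- r * (Tend - t))) *
              exp (Complex \<delta> y * complex_of_real
                (\<Sum>k\<in>{k. ereal t < Tk k \<omega> \<and> Tk k \<omega> \<le> ereal Tend}. X k \<omega>))) \<omega>)
     \<le> exp ((Tend - t) * (lmax * (enn2real (SUP l\<in>{lmin..lmax}.
              \<integral>\<^sup>+x. ennreal (exp (\<delta> * x)) \<partial>nu l) - 1) - r))"
proof -
  interpret bounded_intensity_mpp M F Tk X lam nu lmin lmax \<delta> t Tend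
    by (intro bounded_intensity_mpp.intro mpp_space.intro filtered_measure.intro mpp_space_axioms.intro
        bounded_intensity_mpp_axioms.intro exp_mom assms)
  interpret prob_space M by (rule assms(1))
  define N where "N = vimage_algebra (space M) (\<lambda>\<omega>. lam \<omega> t) borel"
  define S where "S \<omega> = (\<Sum>k\<in>{k. ereal t < Tk k \<omega> \<and> Tk k \<omega> \<le> ereal Tend}. X k \<omega>)" for \<omega>
  have [measurable]: "S \<in> borel_measurable M"
    unfolding S_def by (rule window_sum_measurable)
  have lam_t: "(\<lambda>\<omega>. lam \<omega> t) \<in> borel_measurable (F t)"
    by (rule predictable_process_adapted[OF lam_pred t_nonneg])
  have "(\<integral>\<^sup>+\<omega>. indicator B \<omega> * ennreal (exp (- r * (Tend - t)) * exp (\<delta> * S \<omega>)) \<partial>M)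
      \<le> emeasure M B * ennreal (exp ((Tend - t) * (growth_rate - r)))" if "B \<in> sets N" for B
    using that sets_vimage_algebra_adapted[OF lam_t] \<open>t \<le> Tend\<close> unfolding N_def S_def
    by (intro nn_integral_indicator_discounted_le) auto
  moreover have "cmod (exp (complex_of_real (- r * (Tend - t))) * exp (Complex \<delta> y * complex_of_real (S \<omega>)))
      = exp (- r * (Tend - t)) * exp (\<delta> * S \<omega>)" for \<omega>
    by (simp add: norm_mult)
  ultimately have "AE \<omega> in M. cmod (cond_exp_complex M N
      (\<lambda>\<omega>. exp (complex_of_real (- r * (Tend - t))) * exp (Complex \<delta> y * complex_of_real (S \<omega>))) \<omega>)
      \<le> exp ((Tend - t) * (growth_rate - r))"
    unfolding N_def
    by (intro sigma_finite_subalgebra.cmod_cond_exp_complex_le sigma_finite_subalgebra_vimage_adapted[OF _ lam_t]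
        finite_measure_axioms) simp_all
  thus ?thesis
    by (simp add: N_def S_def growth_rate_def moment_sup_def)
qed

end
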